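(* Let $\omega\subset\mathbb{R}^2$ be a smooth, bounded, connected open set and $h:\omega\to(0,\infty)$ a positive, bounded $C^1$ function. For $\varepsilon>0$ let $\Omega^\varepsilon=\{(x',x_3)\in\mathbb{R}^2\times\mathbb{R}: x'\in\omega,\ 0<x_3<\varepsilon h(x')\}$ and $\Omega=\{(z',z_3): z'\in\omega,\ 0<z_3<h(z')\}$. There is a constant $C>0$ independent of $\varepsilon$ such that for all $\varphi\in H^1_0(\Omega^\varepsilon)^3$, $$\|\varphi\|_{L^4(\Omega^\varepsilon)^3}\leq C\varepsilon^{1/4}\|D\varphi\|_{L^2(\Omega^\varepsilon)^{3\times3}},$$ and, writing $\widetilde\varphi(z)=\varphi(z',\varepsilon z_3)$ for $z\in\Omega$, $$\|\widetilde\varphi\|_{L^4(\Omega)^3}\leq C\varepsilon^{1/2}\|D_\varepsilon\widetilde\varphi\|_{L^2(\Omega)^{3\times3}}.$$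
   Context: $D\varphi$ denotes the gradient matrix $(D\varphi)_{ij}=\partial_{x_j}\varphi_i$. For a function $\widetilde\varphi$ on $\Omega$, $D_\varepsilon\widetilde\varphi$ is the $3\times3$ matrix with $(D_\varepsilon\widetilde\varphi)_{ij}=\partial_{z_j}\widetilde\varphi_i$ for $j=1,2$ and $(D_\varepsilon\widetilde\varphi)_{i3}=\varepsilon^{-1}\partial_{z_3}\widetilde\varphi_i$, $i=1,2,3$. *)

theory Defs
  imports "HOL-Analysis.Analysis"
begin

definition proj12 :: "real^3 \<Rightarrow> real^2" where
  "proj12 x = (\<chi> i. if i = 1 then x $ 1 else x $ 2)"

definition pt3 :: "real^2 \<Rightarrow> real \<Rightarrow> real^3" where
  "pt3 y t = (\<chi> i. if i = 1 then y $ 1 else if i = 2 then y $ 2 else t)"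

definition pd :: "'n::finite \<Rightarrow> (real^'n \<Rightarrow> 'b::real_normed_vector) \<Rightarrow> real^'n \<Rightarrow> 'b" where
  "pd j f x = frechet_derivative f (at x) (axis j 1)"

fun iter_pd :: "'n::finite list \<Rightarrow> (real^'n \<Rightarrow> real) \<Rightarrow> real^'n \<Rightarrow> real" where
  "iter_pd [] f = f"
| "iter_pd (j # js) f = pd j (iter_pd js f)"

definition smooth_fun :: "(real^'n::finite \<Rightarrow> real) \<Rightarrow> bool" where
  "smooth_fun f \<longleftrightarrow> (\<forall>js. (\<forall>x. iter_pd js f differentiable (at x)) \<and> continuous_on UNIV (iter_pd js f))"

(* bounded open set with smooth (C^infinity) boundary, via a global defining function *)
definition smooth_bounded_domain :: "(real^2) set \<Rightarrow> bool" where
  "smooth_bounded_domain w \<longleftrightarrow> open w \<and> bounded w \<and>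
     (\<exists>\<rho>. smooth_fun \<rho> \<and> w = {x. \<rho> x < 0} \<and>
        (\<forall>x\<in>frontier w. \<exists>j. pd j \<rho> x \<noteq> 0))"

definition C1_on :: "(real^'n::finite \<Rightarrow> real) \<Rightarrow> (real^'n) set \<Rightarrow> bool" where
  "C1_on f S \<longleftrightarrow> (\<forall>x\<in>S. f differentiable (at x)) \<and> (\<forall>j. continuous_on S (pd j f))"

definition grad3 :: "(real^3 \<Rightarrow> real^3) \<Rightarrow> real^3 \<Rightarrow> real^3^3" where
  "grad3 f x = (\<chi> i j. pd j f x $ i)"

definition C1c :: "(real^3) set \<Rightarrow> (real^3 \<Rightarrow> real^3) \<Rightarrow> bool" where
  "C1c U f \<longleftrightarrow> (\<forall>x. f differentiable (at x)) \<and> (\<forall>j. continuous_on UNIV (pd j f)) \<and>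
     (\<exists>K. compact K \<and> K \<subseteq> U \<and> (\<forall>x. x \<notin> K \<longrightarrow> f x = 0))"

(* h10 U phi G : phi \<in> H^1_0(U)^3 and G is its (weak) gradient D phi, i.e. (phi, G) is the
   H^1-limit of (f_n, D f_n) with f_n \<in> C^1_c(U)^3 (closure of C_c in H^1). *)
definition h10 :: "(real^3) set \<Rightarrow> (real^3 \<Rightarrow> real^3) \<Rightarrow> (real^3 \<Rightarrow> real^3^3) \<Rightarrow> bool" where
  "h10 U \<phi> G \<longleftrightarrow> \<phi> \<in> borel_measurable (lebesgue_on U) \<and> G \<in> borel_measurable (lebesgue_on U) \<and>
     (\<exists>f. (\<forall>n. C1c U (f n)) \<and>
        ((\<lambda>n. \<integral>\<^sup>+x\<in>U. ennreal ((norm (f n x - \<phi> x))\<^sup>2) \<partial>lebesgue) \<longlonglongrightarrow> 0) \<and>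
        ((\<lambda>n. \<integral>\<^sup>+x\<in>U. ennreal ((norm (grad3 (f n) x - G x))\<^sup>2) \<partial>lebesgue) \<longlonglongrightarrow> 0))"

(* L^p norm over U (norm on real^3^3 is the Frobenius norm) *)
definition lp_norm :: "real \<Rightarrow> (real^3) set \<Rightarrow> (real^3 \<Rightarrow> 'b::real_normed_vector) \<Rightarrow> real" where
  "lp_norm p U f = (\<integral>x. norm (f x) powr p \<partial>(lebesgue_on U)) powr (1 / p)"

definition in_Lp :: "real \<Rightarrow> (real^3) set \<Rightarrow> (real^3 \<Rightarrow> 'b::real_normed_vector) \<Rightarrow> bool" where
  "in_Lp p U f \<longleftrightarrow> f \<in> borel_measurable (lebesgue_on U) \<and>
     integrable (lebesgue_on U) (\<lambda>x. norm (f x) powr p)"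

definition thin_dom :: "(real^2) set \<Rightarrow> (real^2 \<Rightarrow> real) \<Rightarrow> real \<Rightarrow> (real^3) set" where
  "thin_dom w h eps = {x. proj12 x \<in> w \<and> 0 < x $ 3 \<and> x $ 3 < eps * h (proj12 x)}"

definition rescale :: "real \<Rightarrow> (real^3 \<Rightarrow> real^3) \<Rightarrow> real^3 \<Rightarrow> real^3" where
  "rescale eps \<phi> z = \<phi> (pt3 (proj12 z) (eps * z $ 3))"

definition Deps :: "real \<Rightarrow> (real^3 \<Rightarrow> real^3^3) \<Rightarrow> real^3 \<Rightarrow> real^3^3" where
  "Deps eps G z = (\<chi> i j. if j = 3 then G z $ i $ j / eps else G z $ i $ j)"

end

theory Submission
  imports Defs
begin

text \<open>For a \<open>C\<^sup>1\<close> field \<open>f\<close> with compact support in the slab \<open>0 < x\<^sub>3 < L\<close>, the fundamental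
  theorem of calculus along a coordinate line gives \<open>|f(x)|\<^sup>2 \<le> \<integral> 2 |f| |\<partial>\<^sub>k f|\<close>.  On each
  horizontal slice, using the lines in directions 1 and 2 and Cauchy-Schwarz yields the
  two-dimensional Ladyzhenskaya inequality
  \<open>\<integral>|f|\<^sup>4 \<le> 2 (\<integral>|f|\<^sup>2) (\<integral>|\<partial>\<^sub>1 f|\<^sup>2 + \<integral>|\<partial>\<^sub>2 f|\<^sup>2)\<close>, while the vertical lines bound the
  \<open>L\<^sup>2\<close> norm of every slice by \<open>\<integral> 2 |f| |\<partial>\<^sub>3 f| \<le> 4 L \<integral>|\<partial>\<^sub>3 f|\<^sup>2\<close>, the short height
  entering through \<open>\<integral>|f|\<^sup>2 \<le> L \<integral> 2 |f| |\<partial>\<^sub>3 f|\<close>.  Integrating over the slices,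
  \<open>\<integral>|f|\<^sup>4 \<le> 8 L \<integral>|\<partial>\<^sub>3 f|\<^sup>2 (\<integral>|\<partial>\<^sub>1 f|\<^sup>2 + \<integral>|\<partial>\<^sub>2 f|\<^sup>2) \<le> 8 L \<epsilon>\<^sup>2 \<parallel>D\<^sub>\<epsilon> f\<parallel>\<^sub>2\<^sup>4\<close>,
  and Fatou's lemma carries this to \<open>H\<^sup>1\<^sub>0\<close> limits.  The thin domain lies in a slab of height
  \<open>\<epsilon> sup h\<close> (take \<open>\<epsilon> = 1\<close> in \<open>D\<^sub>\<epsilon>\<close>), the rescaled domain in one of height \<open>sup h\<close>.\<close>

section \<open>Coordinates and iterated integrals in \<open>\<real>\<^sup>3\<close>\<close>

definition point3 :: "3 \<Rightarrow> 3 \<Rightarrow> real \<Rightarrow> real \<Rightarrow> real \<Rightarrow> real^3" where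
  "point3 i j a b c = (\<chi> l. if l = i then a else if l = j then b else c)"

lemma point3_eq_sum_axis:
  "point3 i j a b c = c *\<^sub>R 1 + (a - c) *\<^sub>R axis i 1 + (if i = j then 0 else b - c) *\<^sub>R axis j 1"
  by (auto simp: vec_eq_iff point3_def axis_def)

lemma measurable_point3 [measurable]:
  assumes [measurable]: "f \<in> borel_measurable M" "g \<in> borel_measurable M" "h \<in> borel_measurable M"
  shows "(\<lambda>x. point3 i j (f x) (g x) (h x)) \<in> borel_measurable M"
  unfolding point3_eq_sum_axis by measurable

lemma point3_shift: "point3 i j s b c = point3 i j 0 b c + s *\<^sub>R axis i 1"
  by (auto simp: vec_eq_iff point3_def axis_def)

lemma point3_rotate: "point3 1 2 a b c = point3 3 1 c a b"
  and point3_swap: "point3 1 2 a b c = point3 2 1 b a c"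
  by (auto simp: vec_eq_iff point3_def forall_3)

lemma point3_nth3: "point3 3 1 a b c $ 3 = a"
  by (simp add: point3_def)

lemma UNIV_3_eq:
  fixes i j k :: 3
  assumes "i \<noteq> j" "i \<noteq> k" "j \<noteq> k"
  shows "UNIV = {i, j, k}"
proof -
  have "card {i, j, k} = CARD(3)" using assms by auto
  then show ?thesis by (intro card_subset_eq[symmetric]) auto
qed

lemma nn_integral_lborel_point3:
  fixes G :: "real^3 \<Rightarrow> ennreal" and i j k :: 3
  assumes [measurable]: "G \<in> borel_measurable borel" and ijk: "i \<noteq> j" "i \<noteq> k" "j \<noteq> k"
  shows "(\<integral>\<^sup>+x. G x \<partial>lborel) = (\<integral>\<^sup>+c. \<integral>\<^sup>+b. \<integral>\<^sup>+a. G (point3 i j a b c) \<partial>lborel \<partial>lborel \<partial>lborel)"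
proof -
  interpret P: product_sigma_finite "\<lambda>_::real^3. lborel :: real measure" by standard
  let ?e = "\<lambda>l::3. axis l (1::real)"
  let ?T = "\<lambda>f::real^3 \<Rightarrow> real. \<Sum>b\<in>Basis. f b *\<^sub>R b"
  have ne: "?e i \<noteq> ?e j" "?e i \<noteq> ?e k" "?e j \<noteq> ?e k"
    using ijk by (auto simp: axis_eq_axis)
  have Basis: "(Basis :: (real^3) set) = {?e i, ?e j, ?e k}"
    using UNIV_3_eq[OF ijk] by (auto simp: Basis_vec_def)
  have T: "?T (x(?e i := a)) = point3 i j a (x (?e j)) (x (?e k))" for x a
    unfolding Basis using ne ijk UNIV_3_eq[OF ijk] by (auto simp: vec_eq_iff point3_def axis_def)
  have "(\<lambda>f. G (?T f)) \<in> borel_measurable (\<Pi>\<^sub>M b\<in>Basis. lborel)"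
    by measurable
  then have GT: "(\<lambda>f. G (?T f)) \<in> borel_measurable (\<Pi>\<^sub>M b\<in>{?e i, ?e j, ?e k}. lborel)"
    by (simp only: Basis)
  have "(\<integral>\<^sup>+x. G x \<partial>lborel) = (\<integral>\<^sup>+f. G (?T f) \<partial>(\<Pi>\<^sub>M b\<in>{?e i, ?e j, ?e k}. lborel))"
    by (subst lborel_eq) (simp add: nn_integral_distr Basis)
  also have "\<dots> = (\<integral>\<^sup>+x. \<integral>\<^sup>+a. G (?T (x(?e i := a))) \<partial>lborel \<partial>(\<Pi>\<^sub>M b\<in>{?e j, ?e k}. lborel))"
    by (rule P.product_nn_integral_insert) (use ne GT in auto)
  also have "\<dots> = (\<integral>\<^sup>+x. \<integral>\<^sup>+b. \<integral>\<^sup>+a. G (point3 i j a b (x (?e k))) \<partial>lborel \<partial>lborel \<partial>(\<Pi>\<^sub>M b\<in>{?e k}. lborel))"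
    unfolding T by (subst P.product_nn_integral_insert) (use ne in auto, measurable)
  also have "\<dots> = (\<integral>\<^sup>+c. \<integral>\<^sup>+b. \<integral>\<^sup>+a. G (point3 i j a b c) \<partial>lborel \<partial>lborel \<partial>lborel)"
    by (rule P.product_nn_integral_singleton) measurable
  finally show ?thesis .
qed

definition slice_integral :: "real \<Rightarrow> (real^3 \<Rightarrow> ennreal) \<Rightarrow> ennreal" where
  "slice_integral c g = (\<integral>\<^sup>+b. \<integral>\<^sup>+a. g (point3 1 2 a b c) \<partial>lborel \<partial>lborel)"

lemma nn_integral_lborel_slices:
  assumes "g \<in> borel_measurable borel"
  shows "(\<integral>\<^sup>+x. g x \<partial>lborel) = (\<integral>\<^sup>+c. slice_integral c g \<partial>lborel)"
  unfolding slice_integral_def by (rule nn_integral_lborel_point3[OF assms, where k=3]) auto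

lemma Cauchy_Schwarz_nn_integral_iterated:
  fixes u v :: "real \<Rightarrow> real \<Rightarrow> ennreal"
  assumes [measurable]: "(\<lambda>p. u (fst p) (snd p)) \<in> borel_measurable (lborel \<Otimes>\<^sub>M lborel)"
    "(\<lambda>p. v (fst p) (snd p)) \<in> borel_measurable (lborel \<Otimes>\<^sub>M lborel)"
  shows "(\<integral>\<^sup>+b. \<integral>\<^sup>+a. u a b * v a b \<partial>lborel \<partial>lborel)\<^sup>2 \<le>
     (\<integral>\<^sup>+b. \<integral>\<^sup>+a. (u a b)\<^sup>2 \<partial>lborel \<partial>lborel) * (\<integral>\<^sup>+b. \<integral>\<^sup>+a. (v a b)\<^sup>2 \<partial>lborel \<partial>lborel)"
proof -
  have pair: "(\<integral>\<^sup>+b. \<integral>\<^sup>+a. w (a, b) \<partial>lborel \<partial>lborel) = integral\<^sup>N (lborel \<Otimes>\<^sub>M lborel) w"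
    if [measurable]: "w \<in> borel_measurable (lborel \<Otimes>\<^sub>M lborel)" for w :: "real \<times> real \<Rightarrow> ennreal"
    by (rule lborel_pair.nn_integral_snd) measurable
  have "(\<integral>\<^sup>+b. \<integral>\<^sup>+a. u a b * v a b \<partial>lborel \<partial>lborel) = (\<integral>\<^sup>+p. u (fst p) (snd p) * v (fst p) (snd p) \<partial>(lborel \<Otimes>\<^sub>M lborel))"
    using pair[of "\<lambda>p. u (fst p) (snd p) * v (fst p) (snd p)"] by simp
  moreover have "(\<integral>\<^sup>+b. \<integral>\<^sup>+a. (u a b)\<^sup>2 \<partial>lborel \<partial>lborel) = (\<integral>\<^sup>+p. (u (fst p) (snd p))\<^sup>2 \<partial>(lborel \<Otimes>\<^sub>M lborel))"
    using pair[of "\<lambda>p. (u (fst p) (snd p))\<^sup>2"] by simp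
  moreover have "(\<integral>\<^sup>+b. \<integral>\<^sup>+a. (v a b)\<^sup>2 \<partial>lborel \<partial>lborel) = (\<integral>\<^sup>+p. (v (fst p) (snd p))\<^sup>2 \<partial>(lborel \<Otimes>\<^sub>M lborel))"
    using pair[of "\<lambda>p. (v (fst p) (snd p))\<^sup>2"] by simp
  ultimately show ?thesis
    by (simp only:) (rule Cauchy_Schwarz_nn_integral; measurable)
qed

lemma ennreal_le_of_power2_le:
  fixes x y :: ennreal
  assumes "x\<^sup>2 \<le> y\<^sup>2"
  shows "x \<le> y"
proof (cases x rule: ennreal_cases)
  case (real r)
  show ?thesis
  proof (cases y rule: ennreal_cases)
    case (real s)
    with assms \<open>x = ennreal r\<close> \<open>0 \<le> r\<close> have "r\<^sup>2 \<le> s\<^sup>2"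
      by (simp add: ennreal_power)
    from this \<open>0 \<le> s\<close> have "r \<le> s" by (rule power2_le_imp_le)
    with \<open>x = ennreal r\<close> real show ?thesis by (simp add: ennreal_leI)
  qed simp
next
  case top
  with assms show ?thesis
    by (cases y rule: ennreal_cases) (auto simp: power2_eq_square ennreal_mult_top ennreal_mult[symmetric] top_unique)
qed

lemma ennreal_four_mult_le_power2_add:
  fixes a b :: ennreal
  shows "4 * a * b \<le> (a + b)\<^sup>2"
proof (cases a rule: ennreal_cases)
  case (real x)
  show ?thesis
  proof (cases b rule: ennreal_cases)
    case (real y)
    have "4 * x * y \<le> (x + y)\<^sup>2"
      using zero_le_square[of "x - y"] by (simp add: power2_eq_square algebra_simps)
    then have "ennreal (4 * x * y) \<le> ennreal ((x + y)\<^sup>2)"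
      by (rule ennreal_leI)
    moreover have "ennreal (4 * x * y) = 4 * a * b"
      using \<open>a = ennreal x\<close> \<open>0 \<le> x\<close> real by (simp add: ennreal_mult)
    moreover have "ennreal ((x + y)\<^sup>2) = (a + b)\<^sup>2"
      using \<open>a = ennreal x\<close> \<open>0 \<le> x\<close> real by (simp add: ennreal_power[symmetric])
    ultimately show ?thesis by simp
  next
    case top then show ?thesis
      by (cases "a = 0") (auto simp: power2_eq_square ennreal_mult_top)
  qed
next
  case top then show ?thesis
    by (cases "b = 0") (auto simp: power2_eq_square ennreal_mult_top ennreal_top_mult)
qed

section \<open>The one-dimensional estimate along coordinate lines\<close>

lemma power2_norm_le_nn_integral_line:
  fixes g g' :: "real \<Rightarrow> 'a::real_inner"
  assumes deriv: "\<And>s. (g has_vector_derivative g' s) (at s)" and cont: "continuous_on UNIV g'"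
    and vanish: "\<And>s. \<bar>s\<bar> > B \<Longrightarrow> g s = 0"
  shows "ennreal ((norm (g t))\<^sup>2) \<le> (\<integral>\<^sup>+s. ennreal (2 * norm (g s) * norm (g' s)) \<partial>lborel)"
proof -
  define a where "a = - (\<bar>B\<bar> + \<bar>t\<bar> + 1)"
  have "a \<le> t" and "g a = 0"
    using vanish unfolding a_def by auto
  have g_cont: "continuous_on UNIV g"
    using deriv by (meson continuous_at_imp_continuous_on has_vector_derivative_continuous)
  have "((\<lambda>s. g s \<bullet> g s) has_vector_derivative (g s \<bullet> g' s + g' s \<bullet> g s)) (at s)" for s
    using bounded_bilinear.has_vector_derivative[OF bounded_bilinear_inner deriv deriv] by simp
  then have "((\<lambda>s. g s \<bullet> g' s + g' s \<bullet> g s) has_integral (g t \<bullet> g t - g a \<bullet> g a)) {a..t}"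
    by (intro fundamental_theorem_of_calculus[OF \<open>a \<le> t\<close>]) (auto intro: has_vector_derivative_at_within)
  then have I1: "((\<lambda>s. 2 * (g s \<bullet> g' s)) has_integral (norm (g t))\<^sup>2) {a..t}"
    using \<open>g a = 0\<close> by (simp add: inner_commute power2_norm_eq_inner)
  let ?k = "\<lambda>s. 2 * norm (g s) * norm (g' s)"
  have "continuous_on {a..t} ?k"
    by (intro continuous_intros continuous_on_subset[OF g_cont] continuous_on_subset[OF cont]) auto
  then have I2: "(?k has_integral integral {a..t} ?k) {a..t}"
    using integrable_continuous_interval by blast
  have "(norm (g t))\<^sup>2 \<le> integral {a..t} ?k"
    by (rule has_integral_le[OF I1 I2]) (use norm_cauchy_schwarz in auto)
  also have "integral {a..t} ?k = (\<integral>\<^sup>+s. indicator {a..t} s * ?k s \<partial>lborel)"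
    by (rule nn_integral_has_integral_lebesgue[OF _ I2, symmetric]) auto
  finally have "ennreal ((norm (g t))\<^sup>2) \<le> (\<integral>\<^sup>+s. indicator {a..t} s * ?k s \<partial>lborel)"
    by (simp add: ennreal_leI)
  also have "\<dots> \<le> (\<integral>\<^sup>+s. ?k s \<partial>lborel)"
    by (intro nn_integral_mono) (auto simp: indicator_def)
  finally show ?thesis .
qed

lemma has_vector_derivative_axis_line:
  fixes f :: "real^'n \<Rightarrow> 'b::real_normed_vector"
  assumes "f differentiable (at (x + s *\<^sub>R axis k 1))"
  shows "((\<lambda>s. f (x + s *\<^sub>R axis k 1)) has_vector_derivative pd k f (x + s *\<^sub>R axis k 1)) (at s)"
proof -
  let ?e = "axis k (1::real)"
  let ?F = "frechet_derivative f (at (x + s *\<^sub>R ?e))"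
  have f_deriv: "(f has_derivative ?F) (at (x + s *\<^sub>R ?e))"
    using assms frechet_derivative_works by blast
  have "((\<lambda>s. x + s *\<^sub>R ?e) has_derivative (\<lambda>h. h *\<^sub>R ?e)) (at s)"
    by (auto intro!: derivative_eq_intros)
  from diff_chain_at[OF this f_deriv]
  have "((f \<circ> (\<lambda>s. x + s *\<^sub>R ?e)) has_derivative (?F \<circ> (\<lambda>h. h *\<^sub>R ?e))) (at s)" .
  moreover have "?F \<circ> (\<lambda>h. h *\<^sub>R ?e) = (\<lambda>h. h *\<^sub>R ?F ?e)"
    using has_derivative_linear[OF f_deriv] by (auto simp: o_def linear_cmul)
  ultimately show ?thesis
    unfolding has_vector_derivative_def pd_def by (simp add: o_def)
qed

lemma power2_norm_le_nn_integral_axis_line: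
  fixes f :: "real^'n \<Rightarrow> 'b::real_inner"
  assumes diff: "\<And>x. f differentiable (at x)" and cont: "continuous_on UNIV (pd k f)"
    and "compact K" and vanish: "\<And>x. x \<notin> K \<Longrightarrow> f x = 0"
  shows "ennreal ((norm (f (x + t *\<^sub>R axis k 1)))\<^sup>2) \<le>
     (\<integral>\<^sup>+s. ennreal (2 * norm (f (x + s *\<^sub>R axis k 1)) * norm (pd k f (x + s *\<^sub>R axis k 1))) \<partial>lborel)"
proof -
  obtain R where R: "\<And>y. y \<in> K \<Longrightarrow> norm y \<le> R"
    using compact_imp_bounded[OF \<open>compact K\<close>] bounded_iff by blast
  show ?thesis
  proof (rule power2_norm_le_nn_integral_line)
    show "f (x + s *\<^sub>R axis k 1) = 0" if "\<bar>s\<bar> > R + norm x" for s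
    proof -
      have "norm (x + s *\<^sub>R axis k 1) > R"
        using that norm_triangle_ineq2[of "s *\<^sub>R axis k (1::real)" "-x"] by (auto simp: algebra_simps)
      then show ?thesis using R vanish by force
    qed
    show "((\<lambda>s. f (x + s *\<^sub>R axis k 1)) has_vector_derivative pd k f (x + s *\<^sub>R axis k 1)) (at s)" for s
      using has_vector_derivative_axis_line diff by blast
    show "continuous_on UNIV (\<lambda>s. pd k f (x + s *\<^sub>R axis k 1))"
      by (rule continuous_on_compose2[OF cont]) (auto intro!: continuous_intros)
  qed
qed

section \<open>Ladyzhenskaya's inequality in a slab\<close>

text \<open>\<open>N\<close> stands for \<open>|f|\<close> and \<open>dN k\<close> for \<open>|\<partial>\<^sub>k f|\<close>, where \<open>f\<close> is a \<open>C\<^sup>1\<close> field with compact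
  support in the slab \<open>0 < x\<^sub>3 < L\<close>.\<close>

locale slab_line_estimates =
  fixes N :: "real^3 \<Rightarrow> ennreal" and dN :: "3 \<Rightarrow> real^3 \<Rightarrow> ennreal" and L :: real
  assumes measurable_N [measurable]: "N \<in> borel_measurable borel"
    and measurable_dN [measurable]: "\<And>k. dN k \<in> borel_measurable borel"
    and line_estimate: "\<And>x t k. (N (x + t *\<^sub>R axis k 1))\<^sup>2 \<le>
          (\<integral>\<^sup>+s. 2 * N (x + s *\<^sub>R axis k 1) * dN k (x + s *\<^sub>R axis k 1) \<partial>lborel)"
    and vanish_outside_slab: "\<And>x. \<not> (0 < x $ 3 \<and> x $ 3 < L) \<Longrightarrow> N x = 0"
    and finite_vertical: "(\<integral>\<^sup>+x. N x * dN 3 x \<partial>lborel) < \<infinity>"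
begin

lemma line_estimate_point3:
  "(N (point3 i j a b c))\<^sup>2 \<le> (\<integral>\<^sup>+s. 2 * N (point3 i j s b c) * dN i (point3 i j s b c) \<partial>lborel)"
  using line_estimate[of "point3 i j 0 b c" a i] by (simp only: point3_shift[symmetric])

lemma vertical_integral_eq_iterated:
  "(\<integral>\<^sup>+x. 2 * N x * dN 3 x \<partial>lborel) =
     (\<integral>\<^sup>+c. \<integral>\<^sup>+b. \<integral>\<^sup>+s. 2 * N (point3 3 1 s b c) * dN 3 (point3 3 1 s b c) \<partial>lborel \<partial>lborel \<partial>lborel)"
  by (rule nn_integral_lborel_point3[where k=2]) auto

lemma nn_integral_sq_le_vertical_integral:
  "(\<integral>\<^sup>+x. (N x)\<^sup>2 \<partial>lborel) \<le> ennreal L * (\<integral>\<^sup>+x. 2 * N x * dN 3 x \<partial>lborel)"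
proof -
  define \<Lambda> where "\<Lambda> b c = (\<integral>\<^sup>+s. 2 * N (point3 3 1 s b c) * dN 3 (point3 3 1 s b c) \<partial>lborel)" for b c
  have "(\<integral>\<^sup>+x. (N x)\<^sup>2 \<partial>lborel) = (\<integral>\<^sup>+c. \<integral>\<^sup>+b. \<integral>\<^sup>+a. (N (point3 3 1 a b c))\<^sup>2 \<partial>lborel \<partial>lborel \<partial>lborel)"
    by (rule nn_integral_lborel_point3[where k=2]) auto
  also have "\<dots> \<le> (\<integral>\<^sup>+c. \<integral>\<^sup>+b. \<integral>\<^sup>+a. \<Lambda> b c * indicator {0..L} a \<partial>lborel \<partial>lborel \<partial>lborel)"
  proof (intro nn_integral_mono)
    fix a b c
    show "(N (point3 3 1 a b c))\<^sup>2 \<le> \<Lambda> b c * indicator {0..L} a"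
      using line_estimate_point3[of 3 1 a b c] vanish_outside_slab[of "point3 3 1 a b c"]
      by (cases "a \<in> {0..L}") (auto simp: \<Lambda>_def point3_nth3)
  qed
  also have "\<dots> = (\<integral>\<^sup>+c. \<integral>\<^sup>+b. ennreal L * \<Lambda> b c \<partial>lborel \<partial>lborel)"
    by (auto simp: nn_integral_cmult_indicator emeasure_lborel_Icc_eq mult.commute ennreal_neg)
  also have "\<dots> = ennreal L * (\<integral>\<^sup>+x. 2 * N x * dN 3 x \<partial>lborel)"
    unfolding vertical_integral_eq_iterated \<Lambda>_def by (simp add: nn_integral_cmult)
  finally show ?thesis .
qed

lemma vertical_integral_le:
  "(\<integral>\<^sup>+x. 2 * N x * dN 3 x \<partial>lborel) \<le> 4 * ennreal L * (\<integral>\<^sup>+x. (dN 3 x)\<^sup>2 \<partial>lborel)"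
    (is "?P \<le> 4 * ennreal L * ?E")
proof (cases "?P = 0")
  case False
  have "?P < \<infinity>"
    using finite_vertical by (simp add: nn_integral_cmult mult.assoc ennreal_mult_less_top)
  have "?P\<^sup>2 \<le> (\<integral>\<^sup>+x. (2 * N x)\<^sup>2 \<partial>lborel) * ?E"
    by (rule Cauchy_Schwarz_nn_integral) auto
  also have "\<dots> = 4 * (\<integral>\<^sup>+x. (N x)\<^sup>2 \<partial>lborel) * ?E"
    by (simp add: power_mult_distrib nn_integral_cmult)
  also have "\<dots> \<le> 4 * (ennreal L * ?P) * ?E"
    by (intro mult_mono nn_integral_sq_le_vertical_integral) auto
  finally have "?P * ?P \<le> ?P * (4 * ennreal L * ?E)"
    by (simp add: power2_eq_square ac_simps)
  then show ?thesis
    using False \<open>?P < \<infinity>\<close> by (simp add: ennreal_mult_le_mult_iff)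
qed simp

lemma slice_sq_le_vertical_integral:
  "slice_integral c (\<lambda>x. (N x)\<^sup>2) \<le> (\<integral>\<^sup>+x. 2 * N x * dN 3 x \<partial>lborel)"
proof -
  have "slice_integral c (\<lambda>x. (N x)\<^sup>2) \<le>
      (\<integral>\<^sup>+b. \<integral>\<^sup>+a. \<integral>\<^sup>+s. 2 * N (point3 3 1 s a b) * dN 3 (point3 3 1 s a b) \<partial>lborel \<partial>lborel \<partial>lborel)"
    unfolding slice_integral_def point3_rotate by (intro nn_integral_mono line_estimate_point3)
  then show ?thesis
    by (simp only: vertical_integral_eq_iterated)
qed

lemma slice_fourth_le:
  "slice_integral c (\<lambda>x. (N x)^4) \<le>
     slice_integral c (\<lambda>x. 2 * N x * dN 1 x) * slice_integral c (\<lambda>x. 2 * N x * dN 2 x)"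
proof -
  define \<alpha> where "\<alpha> b = (\<integral>\<^sup>+s. 2 * N (point3 1 2 s b c) * dN 1 (point3 1 2 s b c) \<partial>lborel)" for b
  define \<beta> where "\<beta> a = (\<integral>\<^sup>+s. 2 * N (point3 2 1 s a c) * dN 2 (point3 2 1 s a c) \<partial>lborel)" for a
  have "slice_integral c (\<lambda>x. (N x)^4) \<le> (\<integral>\<^sup>+b. \<integral>\<^sup>+a. \<alpha> b * \<beta> a \<partial>lborel \<partial>lborel)"
    unfolding slice_integral_def
  proof (intro nn_integral_mono)
    fix a b
    have "(N (point3 1 2 a b c))^4 = (N (point3 1 2 a b c))\<^sup>2 * (N (point3 2 1 b a c))\<^sup>2"
      by (simp add: point3_swap power_add[symmetric])
    also have "\<dots> \<le> \<alpha> b * \<beta> a"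
      unfolding \<alpha>_def \<beta>_def by (intro mult_mono line_estimate_point3) auto
    finally show "(N (point3 1 2 a b c))^4 \<le> \<alpha> b * \<beta> a" .
  qed
  also have "\<dots> = (\<integral>\<^sup>+b. \<alpha> b \<partial>lborel) * (\<integral>\<^sup>+a. \<beta> a \<partial>lborel)"
    unfolding \<alpha>_def \<beta>_def by (simp add: nn_integral_cmult nn_integral_multc)
  also have "(\<integral>\<^sup>+a. \<beta> a \<partial>lborel) = slice_integral c (\<lambda>x. 2 * N x * dN 2 x)"
    unfolding \<beta>_def slice_integral_def point3_swap[symmetric]
    by (rule lborel_pair.Fubini'[symmetric]) measurable
  finally show ?thesis
    by (simp add: \<alpha>_def slice_integral_def)
qed

lemma slice_cross_sq_le:
  "(slice_integral c (\<lambda>x. 2 * N x * dN j x))\<^sup>2 \<le>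
     4 * slice_integral c (\<lambda>x. (N x)\<^sup>2) * slice_integral c (\<lambda>x. (dN j x)\<^sup>2)"
proof -
  have "(slice_integral c (\<lambda>x. 2 * N x * dN j x))\<^sup>2 \<le>
      slice_integral c (\<lambda>x. (2 * N x)\<^sup>2) * slice_integral c (\<lambda>x. (dN j x)\<^sup>2)"
    unfolding slice_integral_def mult.assoc[of 2]
    by (rule Cauchy_Schwarz_nn_integral_iterated[where u="\<lambda>a b. 2 * N (point3 1 2 a b c)",
          simplified mult.assoc]) measurable
  also have "slice_integral c (\<lambda>x. (2 * N x)\<^sup>2) = 4 * slice_integral c (\<lambda>x. (N x)\<^sup>2)"
    unfolding slice_integral_def by (simp add: power_mult_distrib nn_integral_cmult)
  finally show ?thesis .
qed

lemma slice_ladyzhenskaya: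
  "slice_integral c (\<lambda>x. (N x)^4) \<le>
     2 * slice_integral c (\<lambda>x. (N x)\<^sup>2) *
       (slice_integral c (\<lambda>x. (dN 1 x)\<^sup>2) + slice_integral c (\<lambda>x. (dN 2 x)\<^sup>2))"
proof -
  let ?S = "slice_integral c (\<lambda>x. (N x)\<^sup>2)"
  let ?P = "\<lambda>j. slice_integral c (\<lambda>x. 2 * N x * dN j x)"
  let ?Q = "\<lambda>j. slice_integral c (\<lambda>x. (dN j x)\<^sup>2)"
  have "(?P 1 * ?P 2)\<^sup>2 \<le> (4 * ?S * ?Q 1) * (4 * ?S * ?Q 2)"
    unfolding power_mult_distrib by (intro mult_mono slice_cross_sq_le) auto
  also have "\<dots> = 4 * ?S\<^sup>2 * (4 * ?Q 1 * ?Q 2)"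
    by (simp add: power2_eq_square ac_simps)
  also have "\<dots> \<le> 4 * ?S\<^sup>2 * (?Q 1 + ?Q 2)\<^sup>2"
    by (intro mult_left_mono ennreal_four_mult_le_power2_add) auto
  also have "\<dots> = (2 * ?S * (?Q 1 + ?Q 2))\<^sup>2"
    by (simp add: power_mult_distrib)
  finally have "?P 1 * ?P 2 \<le> 2 * ?S * (?Q 1 + ?Q 2)"
    by (rule ennreal_le_of_power2_le)
  with slice_fourth_le show ?thesis
    by (rule order_trans)
qed

theorem ladyzhenskaya:
  "(\<integral>\<^sup>+x. (N x)^4 \<partial>lborel) \<le> 8 * ennreal L * (\<integral>\<^sup>+x. (dN 3 x)\<^sup>2 \<partial>lborel) *
     ((\<integral>\<^sup>+x. (dN 1 x)\<^sup>2 \<partial>lborel) + (\<integral>\<^sup>+x. (dN 2 x)\<^sup>2 \<partial>lborel))"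
proof -
  let ?P3 = "\<integral>\<^sup>+x. 2 * N x * dN 3 x \<partial>lborel"
  let ?Q = "\<lambda>j c. slice_integral c (\<lambda>x. (dN j x)\<^sup>2)"
  have "(\<integral>\<^sup>+x. (N x)^4 \<partial>lborel) = (\<integral>\<^sup>+c. slice_integral c (\<lambda>x. (N x)^4) \<partial>lborel)"
    by (rule nn_integral_lborel_slices) measurable
  also have "\<dots> \<le> (\<integral>\<^sup>+c. 2 * ?P3 * (?Q 1 c + ?Q 2 c) \<partial>lborel)"
    by (intro nn_integral_mono order_trans[OF slice_ladyzhenskaya] mult_right_mono mult_left_mono
        slice_sq_le_vertical_integral) auto
  also have "\<dots> = 2 * ?P3 * ((\<integral>\<^sup>+x. (dN 1 x)\<^sup>2 \<partial>lborel) + (\<integral>\<^sup>+x. (dN 2 x)\<^sup>2 \<partial>lborel))"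
    by (simp add: nn_integral_lborel_slices slice_integral_def nn_integral_cmult nn_integral_add)
  also have "\<dots> \<le> 2 * (4 * ennreal L * (\<integral>\<^sup>+x. (dN 3 x)\<^sup>2 \<partial>lborel)) *
      ((\<integral>\<^sup>+x. (dN 1 x)\<^sup>2 \<partial>lborel) + (\<integral>\<^sup>+x. (dN 2 x)\<^sup>2 \<partial>lborel))"
    by (intro mult_right_mono mult_left_mono vertical_integral_le) auto
  finally show ?thesis
    by (simp add: mult.assoc[symmetric])
qed

end

lemma nn_integral_lborel_less_top_compact_support:
  fixes g :: "'a::euclidean_space \<Rightarrow> real"
  assumes "continuous_on UNIV g" "compact K" "\<And>x. x \<notin> K \<Longrightarrow> g x = 0"
  shows "(\<integral>\<^sup>+x. ennreal (g x) \<partial>lborel) < \<infinity>"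
proof -
  have "compact (g ` K)"
    using assms(1,2) by (meson compact_continuous_image continuous_on_subset subset_UNIV)
  then obtain M where M: "\<And>x. x \<in> K \<Longrightarrow> norm (g x) \<le> M"
    using compact_imp_bounded bounded_iff by (metis imageI)
  have "(\<integral>\<^sup>+x. ennreal (g x) \<partial>lborel) \<le> (\<integral>\<^sup>+x. ennreal M * indicator K x \<partial>lborel)"
    using M assms(3) by (intro nn_integral_mono) (auto simp: indicator_def abs_le_iff intro!: ennreal_leI)
  also have "\<dots> = ennreal M * emeasure lborel K"
    using assms(2) by (intro nn_integral_cmult_indicator) (simp add: borel_compact)
  also have "\<dots> < \<infinity>"
    using emeasure_compact_finite[OF assms(2)] by (simp add: ennreal_mult_less_top)
  finally show ?thesis .
qed

lemma C1c_slab_ladyzhenskaya: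
  fixes f :: "real^3 \<Rightarrow> real^3"
  assumes "C1c U f" and slab: "U \<subseteq> {x. 0 < x $ 3 \<and> x $ 3 < L}"
  shows "(\<integral>\<^sup>+x. ennreal ((norm (f x))^4) \<partial>lborel) \<le>
     8 * ennreal L * (\<integral>\<^sup>+x. ennreal ((norm (pd 3 f x))\<^sup>2) \<partial>lborel) *
       ((\<integral>\<^sup>+x. ennreal ((norm (pd 1 f x))\<^sup>2) \<partial>lborel) + (\<integral>\<^sup>+x. ennreal ((norm (pd 2 f x))\<^sup>2) \<partial>lborel))"
proof -
  obtain K where diff: "\<And>x. f differentiable (at x)" and cont: "\<And>k. continuous_on UNIV (pd k f)"
    and "compact K" "K \<subseteq> U" and vanish: "\<And>x. x \<notin> K \<Longrightarrow> f x = 0"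
    using \<open>C1c U f\<close> unfolding C1c_def by blast
  have f_cont: "continuous_on UNIV f"
    using diff by (meson differentiable_at_imp_differentiable_on differentiable_imp_continuous_on)
  interpret slab_line_estimates "\<lambda>x. ennreal (norm (f x))" "\<lambda>k x. ennreal (norm (pd k f x))" L
  proof
    show "(\<lambda>x. ennreal (norm (f x))) \<in> borel_measurable borel"
      using borel_measurable_continuous_onI[OF f_cont] by measurable
    show "(\<lambda>x. ennreal (norm (pd k f x))) \<in> borel_measurable borel" for k
      using borel_measurable_continuous_onI[OF cont] by measurable
    show "(ennreal (norm (f (x + t *\<^sub>R axis k 1))))\<^sup>2 \<le> (\<integral>\<^sup>+s. 2 * ennreal (norm (f (x + s *\<^sub>R axis k 1))) *
        ennreal (norm (pd k f (x + s *\<^sub>R axis k 1))) \<partial>lborel)" for x t k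
      using power2_norm_le_nn_integral_axis_line[OF diff cont \<open>compact K\<close> vanish, of x t]
      by (simp add: ennreal_power ennreal_mult)
    show "ennreal (norm (f x)) = 0" if "\<not> (0 < x $ 3 \<and> x $ 3 < L)" for x
      using that slab \<open>K \<subseteq> U\<close> vanish by fastforce
    have "(\<integral>\<^sup>+x. ennreal (norm (f x) * norm (pd 3 f x)) \<partial>lborel) < \<infinity>"
      by (rule nn_integral_lborel_less_top_compact_support[OF _ \<open>compact K\<close>])
        (use vanish in \<open>auto intro!: continuous_intros f_cont cont\<close>)
    then show "(\<integral>\<^sup>+x. ennreal (norm (f x)) * ennreal (norm (pd 3 f x)) \<partial>lborel) < \<infinity>"
      by (simp add: ennreal_mult)
  qed
  from ladyzhenskaya show ?thesis
    by (simp add: ennreal_power)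
qed

section \<open>The scaled gradient \<open>D\<^sub>\<epsilon>\<close>\<close>

definition Deps_matrix :: "real \<Rightarrow> real^3^3 \<Rightarrow> real^3^3" where
  "Deps_matrix e A = (\<chi> i j. if j = 3 then A $ i $ j / e else A $ i $ j)"

lemma Deps_eq_Deps_matrix: "Deps e G z = Deps_matrix e (G z)"
  by (simp add: Deps_def Deps_matrix_def)

lemma linear_Deps_matrix: "linear (Deps_matrix e)"
  by (rule linearI) (simp_all add: Deps_matrix_def vec_eq_iff add_divide_distrib)

lemma continuous_on_Deps_matrix: "continuous_on S (Deps_matrix e)"
  by (rule linear_continuous_on[OF linear_conv_bounded_linear[THEN iffD1, OF linear_Deps_matrix]])

lemma Deps_diff: "Deps e A x - Deps e B x = Deps_matrix e (A x - B x)"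
  unfolding Deps_eq_Deps_matrix by (rule linear_diff[OF linear_Deps_matrix, symmetric])

lemma Deps_1: "Deps 1 G = G"
  by (simp add: Deps_def fun_eq_iff vec_eq_iff)

lemma power2_norm_vec: "(norm x)\<^sup>2 = (\<Sum>i\<in>UNIV. (norm (x $ i))\<^sup>2)"
  by (simp add: norm_vec_def L2_set_def sum_nonneg)

lemma power2_norm_matrix3:
  "(norm (A :: real^3^3))\<^sup>2 = (\<Sum>i\<in>UNIV. (A $ i $ 1)\<^sup>2 + (A $ i $ 2)\<^sup>2 + (A $ i $ 3)\<^sup>2)"
  by (simp add: power2_norm_vec sum_3)

lemma power2_norm_Deps_matrix:
  "(norm (Deps_matrix e A))\<^sup>2 = (\<Sum>i\<in>UNIV. (A $ i $ 1)\<^sup>2 + (A $ i $ 2)\<^sup>2 + (A $ i $ 3)\<^sup>2 / e\<^sup>2)"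
  by (simp add: power2_norm_vec Deps_matrix_def sum_3 power_divide)

lemma power2_norm_Deps_matrix_le:
  assumes "e > 0"
  shows "(norm (Deps_matrix e A))\<^sup>2 \<le> max 1 (1 / e\<^sup>2) * (norm A)\<^sup>2"
proof -
  have "(A $ i $ 1)\<^sup>2 + (A $ i $ 2)\<^sup>2 + (A $ i $ 3)\<^sup>2 / e\<^sup>2 \<le>
      max 1 (1 / e\<^sup>2) * ((A $ i $ 1)\<^sup>2 + (A $ i $ 2)\<^sup>2 + (A $ i $ 3)\<^sup>2)" for i
    using mult_right_mono[of 1 "max 1 (1 / e\<^sup>2)" "(A $ i $ 1)\<^sup>2 + (A $ i $ 2)\<^sup>2"]
      mult_right_mono[of "1 / e\<^sup>2" "max 1 (1 / e\<^sup>2)" "(A $ i $ 3)\<^sup>2"]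
    by (simp add: algebra_simps)
  then show ?thesis
    unfolding power2_norm_Deps_matrix power2_norm_matrix3[of A] sum_distrib_left by (intro sum_mono)
qed

lemma power2_norm_Deps_matrix_grad3:
  "(norm (Deps_matrix e (grad3 f x)))\<^sup>2 =
     (norm (pd 1 f x))\<^sup>2 + (norm (pd 2 f x))\<^sup>2 + (norm (pd 3 f x))\<^sup>2 / e\<^sup>2"
  unfolding power2_norm_Deps_matrix
  by (simp add: grad3_def power2_norm_vec sum_3 add_divide_distrib power_divide algebra_simps)

lemma measurable_Deps [measurable]:
  assumes "H \<in> borel_measurable M"
  shows "Deps e H \<in> borel_measurable M"
  unfolding Deps_eq_Deps_matrix
  using measurable_compose[OF assms borel_measurable_continuous_onI[OF continuous_on_Deps_matrix]]
  by (simp add: o_def)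

lemma Deps_L2_tendsto:
  assumes "e > 0" and [measurable]: "\<And>n. H n \<in> borel_measurable M" "G \<in> borel_measurable M"
    and lim: "(\<lambda>n. \<integral>\<^sup>+x. ennreal ((norm (H n x - G x))\<^sup>2) \<partial>M) \<longlonglongrightarrow> 0"
  shows "(\<lambda>n. \<integral>\<^sup>+x. ennreal ((norm (Deps e (H n) x - Deps e G x))\<^sup>2) \<partial>M) \<longlonglongrightarrow> 0"
proof (rule tendsto_sandwich[OF _ _ tendsto_const])
  let ?c = "ennreal (max 1 (1 / e\<^sup>2))"
  show "(\<lambda>n. ?c * (\<integral>\<^sup>+x. ennreal ((norm (H n x - G x))\<^sup>2) \<partial>M)) \<longlonglongrightarrow> 0"
    using ennreal_tendsto_cmult[OF _ lim, of ?c] by simp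
  have "(\<integral>\<^sup>+x. ennreal ((norm (Deps e (H n) x - Deps e G x))\<^sup>2) \<partial>M) \<le>
      (\<integral>\<^sup>+x. ?c * ennreal ((norm (H n x - G x))\<^sup>2) \<partial>M)" for n
    unfolding Deps_diff
    by (intro nn_integral_mono)
      (simp add: ennreal_mult[symmetric] ennreal_leI power2_norm_Deps_matrix_le[OF \<open>e > 0\<close>] del: ennreal_mult)
  then show "eventually (\<lambda>n. (\<integral>\<^sup>+x. ennreal ((norm (Deps e (H n) x - Deps e G x))\<^sup>2) \<partial>M) \<le>
      ?c * (\<integral>\<^sup>+x. ennreal ((norm (H n x - G x))\<^sup>2) \<partial>M)) sequentially"
    by (simp add: nn_integral_cmult)
qed simp

lemma nn_integral_lebesgue_on_eq_lborel:
  fixes F :: "'a::euclidean_space \<Rightarrow> ennreal"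
  assumes "U \<in> sets lebesgue" and "\<And>x. x \<notin> U \<Longrightarrow> F x = 0"
  shows "(\<integral>\<^sup>+x. F x \<partial>lebesgue_on U) = (\<integral>\<^sup>+x. F x \<partial>lborel)"
proof -
  have "(\<integral>\<^sup>+x. F x \<partial>lebesgue_on U) = (\<integral>\<^sup>+x. F x * indicator U x \<partial>lebesgue)"
    using assms(1) by (simp add: nn_integral_restrict_space)
  also have "\<dots> = (\<integral>\<^sup>+x. F x \<partial>lebesgue)"
    using assms(2) by (intro nn_integral_cong) (auto simp: indicator_def)
  finally show ?thesis
    by (simp add: nn_integral_completion)
qed

lemma pd_eq_0_if_locally_0:
  assumes "open S" "\<And>y. y \<in> S \<Longrightarrow> f y = 0" "x \<in> S"
  shows "pd j f x = 0"
proof -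
  have "(f has_derivative (\<lambda>_. 0)) (at x)"
    by (rule has_derivative_transform_within_open[of "\<lambda>_. 0", OF _ assms(1,3)]) (use assms(2) in auto)
  then show ?thesis
    unfolding pd_def using frechet_derivative_at by metis
qed

lemma C1c_obtain_support:
  assumes "C1c U f"
  obtains K where "compact K" "K \<subseteq> U" "\<And>x. x \<notin> K \<Longrightarrow> f x = 0" "\<And>x. x \<notin> K \<Longrightarrow> grad3 f x = 0"
proof -
  obtain K where K: "compact K" "K \<subseteq> U" "\<And>x. x \<notin> K \<Longrightarrow> f x = 0"
    using assms unfolding C1c_def by blast
  have "pd j f x = 0" if "x \<notin> K" for j x
    by (rule pd_eq_0_if_locally_0[of "- K"]) (use K that in \<open>auto intro: compact_imp_closed\<close>)
  then have "grad3 f x = 0" if "x \<notin> K" for x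
    using that by (simp add: grad3_def vec_eq_iff)
  with K that show ?thesis by blast
qed

lemma C1c_continuous_on_grad3:
  assumes "C1c U f"
  shows "continuous_on UNIV (grad3 f)"
  using assms unfolding C1c_def grad3_def by (auto intro!: continuous_intros)

lemma C1c_nn_integral_Deps_less_top:
  assumes "C1c U f" and "U \<in> sets lebesgue"
  shows "(\<integral>\<^sup>+x. ennreal ((norm (Deps e (grad3 f) x))\<^sup>2) \<partial>lebesgue_on U) < \<infinity>"
proof -
  obtain K where "compact K" "K \<subseteq> U" and vanish: "\<And>x. x \<notin> K \<Longrightarrow> grad3 f x = 0"
    using C1c_obtain_support[OF assms(1)] by metis
  have "continuous_on UNIV (\<lambda>x. (norm (Deps e (grad3 f) x))\<^sup>2)"
    unfolding Deps_eq_Deps_matrix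
    by (intro continuous_intros continuous_on_compose2[OF continuous_on_Deps_matrix
          C1c_continuous_on_grad3[OF assms(1)]]) auto
  moreover have "Deps e (grad3 f) x = 0" if "x \<notin> K" for x
    using vanish[OF that] by (simp add: Deps_def vec_eq_iff)
  ultimately show ?thesis
    using \<open>K \<subseteq> U\<close> nn_integral_lborel_less_top_compact_support[OF _ \<open>compact K\<close>]
    by (subst nn_integral_lebesgue_on_eq_lborel[OF assms(2)]) auto
qed

lemma C1c_nn_integral_Deps_eq:
  assumes "C1c U f" and "U \<in> sets lebesgue"
  shows "(\<integral>\<^sup>+x. ennreal ((norm (Deps e (grad3 f) x))\<^sup>2) \<partial>lebesgue_on U) =
     (\<integral>\<^sup>+x. ennreal ((norm (pd 1 f x))\<^sup>2) \<partial>lborel) + (\<integral>\<^sup>+x. ennreal ((norm (pd 2 f x))\<^sup>2) \<partial>lborel) +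
     ennreal (1 / e\<^sup>2) * (\<integral>\<^sup>+x. ennreal ((norm (pd 3 f x))\<^sup>2) \<partial>lborel)"
proof -
  obtain K where "K \<subseteq> U" and vanish: "\<And>x. x \<notin> K \<Longrightarrow> grad3 f x = 0"
    using C1c_obtain_support[OF assms(1)] by metis
  have cont: "continuous_on UNIV (pd j f)" for j
    using assms(1) unfolding C1c_def by blast
  note [measurable] = borel_measurable_continuous_onI[OF cont]
  have pointwise: "ennreal ((norm (Deps e (grad3 f) x))\<^sup>2) = ennreal ((norm (pd 1 f x))\<^sup>2) +
      ennreal ((norm (pd 2 f x))\<^sup>2) + ennreal (1 / e\<^sup>2) * ennreal ((norm (pd 3 f x))\<^sup>2)" for x
  proof -
    have "ennreal ((norm (Deps e (grad3 f) x))\<^sup>2) =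
        ennreal ((norm (pd 1 f x))\<^sup>2 + (norm (pd 2 f x))\<^sup>2) + ennreal ((norm (pd 3 f x))\<^sup>2 / e\<^sup>2)"
      unfolding Deps_eq_Deps_matrix power2_norm_Deps_matrix_grad3 by (rule ennreal_plus) auto
    then show ?thesis
      by (simp add: ennreal_mult[symmetric])
  qed
  have "(\<integral>\<^sup>+x. ennreal ((norm (Deps e (grad3 f) x))\<^sup>2) \<partial>lebesgue_on U) =
      (\<integral>\<^sup>+x. ennreal ((norm (Deps e (grad3 f) x))\<^sup>2) \<partial>lborel)"
    using \<open>K \<subseteq> U\<close> vanish
    by (intro nn_integral_lebesgue_on_eq_lborel[OF assms(2)]) (auto simp: Deps_def vec_eq_iff)
  also have "\<dots> = (\<integral>\<^sup>+x. ennreal ((norm (pd 1 f x))\<^sup>2) + ennreal ((norm (pd 2 f x))\<^sup>2) +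
      ennreal (1 / e\<^sup>2) * ennreal ((norm (pd 3 f x))\<^sup>2) \<partial>lborel)"
    by (simp only: pointwise)
  finally show ?thesis
    by (simp add: nn_integral_add nn_integral_cmult)
qed

lemma C1c_slab_fourth_moment_le:
  fixes f :: "real^3 \<Rightarrow> real^3"
  assumes "C1c U f" and slab: "U \<subseteq> {x. 0 < x $ 3 \<and> x $ 3 < L}" and "0 \<le> L" "e > 0"
    and "U \<in> sets lebesgue"
  shows "(\<integral>\<^sup>+x. ennreal ((norm (f x))^4) \<partial>lebesgue_on U) \<le>
     ennreal (8 * L * e\<^sup>2) * (\<integral>\<^sup>+x. ennreal ((norm (Deps e (grad3 f) x))\<^sup>2) \<partial>lebesgue_on U)\<^sup>2"
proof -
  obtain K where "K \<subseteq> U" and vanish: "\<And>x. x \<notin> K \<Longrightarrow> f x = 0"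
    using C1c_obtain_support[OF assms(1)] by metis
  define E where "E j = (\<integral>\<^sup>+x. ennreal ((norm (pd j f x))\<^sup>2) \<partial>lborel)" for j
  define D where "D = (\<integral>\<^sup>+x. ennreal ((norm (Deps e (grad3 f) x))\<^sup>2) \<partial>lebesgue_on U)"
  have D: "D = E 1 + E 2 + ennreal (1 / e\<^sup>2) * E 3"
    unfolding D_def E_def by (rule C1c_nn_integral_Deps_eq[OF assms(1,5)])
  have "E 3 = ennreal (e\<^sup>2) * (ennreal (1 / e\<^sup>2) * E 3)"
    using \<open>e > 0\<close> by (simp add: mult.assoc[symmetric] ennreal_mult[symmetric] del: ennreal_mult)
  also have "\<dots> \<le> ennreal (e\<^sup>2) * D"
    unfolding D by (intro mult_left_mono) (auto simp: add_increasing)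
  finally have E3: "E 3 \<le> ennreal (e\<^sup>2) * D" .
  have "(\<integral>\<^sup>+x. ennreal ((norm (f x))^4) \<partial>lebesgue_on U) = (\<integral>\<^sup>+x. ennreal ((norm (f x))^4) \<partial>lborel)"
    using \<open>K \<subseteq> U\<close> vanish by (intro nn_integral_lebesgue_on_eq_lborel[OF assms(5)]) auto
  also have "\<dots> \<le> 8 * ennreal L * E 3 * (E 1 + E 2)"
    unfolding E_def by (rule C1c_slab_ladyzhenskaya[OF assms(1) slab])
  also have "\<dots> \<le> 8 * ennreal L * (ennreal (e\<^sup>2) * D) * D"
    by (intro mult_mono E3) (auto simp: D)
  also have "\<dots> = (8 * ennreal L * ennreal (e\<^sup>2)) * D\<^sup>2"
    by (simp add: power2_eq_square ac_simps)
  also have "8 * ennreal L * ennreal (e\<^sup>2) = ennreal (8 * L * e\<^sup>2)"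
    using \<open>0 \<le> L\<close> by (simp add: ennreal_mult)
  finally show ?thesis
    unfolding D_def .
qed

section \<open>Passing to \<open>H\<^sup>1\<^sub>0\<close> limits\<close>

lemma power2_norm_le_Peter_Paul:
  fixes x y :: "'a::real_normed_vector"
  assumes "d > 0"
  shows "(norm y)\<^sup>2 \<le> (1 + d) * (norm x)\<^sup>2 + (1 + 1 / d) * (norm (y - x))\<^sup>2"
proof -
  let ?p = "norm x" and ?q = "norm (y - x)"
  have "0 \<le> d * (?p - ?q / d)\<^sup>2"
    using assms by simp
  also have "d * (?p - ?q / d)\<^sup>2 = d * ?p\<^sup>2 - 2 * ?p * ?q + ?q\<^sup>2 / d"
    using assms by (simp add: power2_eq_square field_simps)
  finally have "2 * ?p * ?q \<le> d * ?p\<^sup>2 + ?q\<^sup>2 / d"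
    by simp
  moreover have "norm y \<le> ?p + ?q"
    using norm_triangle_ineq[of x "y - x"] by simp
  then have "(norm y)\<^sup>2 \<le> (?p + ?q)\<^sup>2"
    by (intro power_mono) auto
  moreover have "(?p + ?q)\<^sup>2 = ?p\<^sup>2 + 2 * ?p * ?q + ?q\<^sup>2"
    by (simp add: power2_eq_square algebra_simps)
  moreover have "(1 + d) * ?p\<^sup>2 + (1 + 1 / d) * ?q\<^sup>2 = ?p\<^sup>2 + (d * ?p\<^sup>2 + ?q\<^sup>2 / d) + ?q\<^sup>2"
    by (simp add: algebra_simps add_divide_distrib)
  ultimately show ?thesis
    by linarith
qed

lemma nn_integral_power2_norm_le_Peter_Paul:
  fixes x y :: "'a \<Rightarrow> 'b::{banach,second_countable_topology}"
  assumes "d > 0" and [measurable]: "x \<in> borel_measurable M" "y \<in> borel_measurable M"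
  shows "(\<integral>\<^sup>+z. ennreal ((norm (y z))\<^sup>2) \<partial>M) \<le>
     ennreal (1 + d) * (\<integral>\<^sup>+z. ennreal ((norm (x z))\<^sup>2) \<partial>M) +
     ennreal (1 + 1 / d) * (\<integral>\<^sup>+z. ennreal ((norm (y z - x z))\<^sup>2) \<partial>M)"
proof -
  have "ennreal ((norm (y z))\<^sup>2) \<le>
      ennreal (1 + d) * ennreal ((norm (x z))\<^sup>2) + ennreal (1 + 1 / d) * ennreal ((norm (y z - x z))\<^sup>2)" for z
  proof -
    have "ennreal ((norm (y z))\<^sup>2) \<le> ennreal ((1 + d) * (norm (x z))\<^sup>2 + (1 + 1 / d) * (norm (y z - x z))\<^sup>2)"
      by (rule ennreal_leI[OF power2_norm_le_Peter_Paul[OF assms(1)]])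
    also have "\<dots> = ennreal (1 + d) * ennreal ((norm (x z))\<^sup>2) + ennreal (1 + 1 / d) * ennreal ((norm (y z - x z))\<^sup>2)"
      using assms(1) by (simp add: ennreal_mult)
    finally show ?thesis .
  qed
  then have "(\<integral>\<^sup>+z. ennreal ((norm (y z))\<^sup>2) \<partial>M) \<le> (\<integral>\<^sup>+z. ennreal (1 + d) * ennreal ((norm (x z))\<^sup>2) +
      ennreal (1 + 1 / d) * ennreal ((norm (y z - x z))\<^sup>2) \<partial>M)"
    by (rule nn_integral_mono)
  then show ?thesis
    by (simp add: nn_integral_add nn_integral_cmult)
qed

lemma nn_integral_power2_norm_less_top_of_L2_tendsto:
  fixes V :: "nat \<Rightarrow> 'a \<Rightarrow> 'b::{banach,second_countable_topology}"
  assumes [measurable]: "\<And>n. V n \<in> borel_measurable M" "\<Psi> \<in> borel_measurable M"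
    and lim: "(\<lambda>n. \<integral>\<^sup>+x. ennreal ((norm (V n x - \<Psi> x))\<^sup>2) \<partial>M) \<longlonglongrightarrow> 0"
    and fin: "\<And>n. (\<integral>\<^sup>+x. ennreal ((norm (V n x))\<^sup>2) \<partial>M) < \<infinity>"
  shows "(\<integral>\<^sup>+x. ennreal ((norm (\<Psi> x))\<^sup>2) \<partial>M) < \<infinity>"
proof -
  obtain n where n: "(\<integral>\<^sup>+x. ennreal ((norm (V n x - \<Psi> x))\<^sup>2) \<partial>M) < 1"
    using eventually_happens'[OF _ order_tendstoD(2)[OF lim, of 1]] by auto
  have "(\<integral>\<^sup>+x. ennreal ((norm (\<Psi> x))\<^sup>2) \<partial>M) \<le>
      ennreal 2 * (\<integral>\<^sup>+x. ennreal ((norm (V n x))\<^sup>2) \<partial>M) +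
      ennreal 2 * (\<integral>\<^sup>+x. ennreal ((norm (V n x - \<Psi> x))\<^sup>2) \<partial>M)"
    using nn_integral_power2_norm_le_Peter_Paul[of 1 "V n" M \<Psi>] by (simp add: norm_minus_commute)
  also have "\<dots> < \<infinity>"
    using fin[of n] n by (simp add: ennreal_mult_less_top order.strict_trans[OF _ ennreal_less_top[of 1]])
  finally show ?thesis .
qed

lemma L2_tendsto_imp_AE_tendsto_subseq:
  fixes u :: "nat \<Rightarrow> 'a \<Rightarrow> 'b::{banach,second_countable_topology}"
  assumes "finite_measure M" and [measurable]: "\<And>n. u n \<in> borel_measurable M" "\<phi> \<in> borel_measurable M"
    and lim: "(\<lambda>n. \<integral>\<^sup>+x. ennreal ((norm (u n x - \<phi> x))\<^sup>2) \<partial>M) \<longlonglongrightarrow> 0"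
  obtains r where "strict_mono r" "AE x in M. (\<lambda>n. u (r n) x) \<longlonglongrightarrow> \<phi> x"
proof -
  interpret finite_measure M by fact
  define w where "w n x = min 1 ((norm (u n x - \<phi> x))\<^sup>2)" for n x
  have [measurable]: "w n \<in> borel_measurable M" for n
    unfolding w_def by measurable
  have w_int: "integrable M (w n)" for n
    by (rule integrable_const_bound[where B=1]) (auto simp: w_def)
  have "(\<lambda>n. \<integral>\<^sup>+x. ennreal (norm (w n x)) \<partial>M) \<longlonglongrightarrow> 0"
    by (rule tendsto_sandwich[OF _ _ tendsto_const lim])
      (auto intro!: always_eventually nn_integral_mono ennreal_leI simp: w_def)
  then have "(\<lambda>n. \<integral>x. norm (w n x) \<partial>M) \<longlonglongrightarrow> 0"
    using tendsto_enn2real[of _ 0] by (simp add: integral_eq_nn_integral)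
  then obtain r where r: "strict_mono r" and ae: "AE x in M. (\<lambda>n. w (r n) x) \<longlonglongrightarrow> 0"
    using tendsto_L1_AE_subseq[of M w, OF w_int] by blast
  have "AE x in M. (\<lambda>n. u (r n) x) \<longlonglongrightarrow> \<phi> x"
    using ae
  proof eventually_elim
    case (elim x)
    have "eventually (\<lambda>n. w (r n) x < 1) sequentially"
      using order_tendstoD(2)[OF elim] by simp
    then have "eventually (\<lambda>n. w (r n) x = (norm (u (r n) x - \<phi> x))\<^sup>2) sequentially"
      by eventually_elim (auto simp: w_def)
    with elim have "(\<lambda>n. (norm (u (r n) x - \<phi> x))\<^sup>2) \<longlonglongrightarrow> 0"
      using tendsto_cong by fastforce
    then have "(\<lambda>n. norm (u (r n) x - \<phi> x)) \<longlonglongrightarrow> 0"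
      using tendsto_real_sqrt by fastforce
    then show ?case
      by (simp add: tendsto_norm_zero_iff LIM_zero_iff)
  qed
  with r that show ?thesis by blast
qed

lemma nn_integral_power_norm_le_of_AE_tendsto:
  fixes u :: "nat \<Rightarrow> 'a \<Rightarrow> 'b::{banach,second_countable_topology}"
  assumes [measurable]: "\<And>n. u n \<in> borel_measurable M"
    and lim: "AE x in M. (\<lambda>n. u n x) \<longlonglongrightarrow> \<phi> x"
    and bound: "eventually (\<lambda>n. (\<integral>\<^sup>+x. ennreal ((norm (u n x))^p) \<partial>M) \<le> B) sequentially"
  shows "(\<integral>\<^sup>+x. ennreal ((norm (\<phi> x))^p) \<partial>M) \<le> B"
proof -
  have "(\<integral>\<^sup>+x. ennreal ((norm (\<phi> x))^p) \<partial>M) = (\<integral>\<^sup>+x. liminf (\<lambda>n. ennreal ((norm (u n x))^p)) \<partial>M)"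
    using lim
  proof (intro nn_integral_cong_AE, eventually_elim)
    case (elim x)
    then have "(\<lambda>n. ennreal ((norm (u n x))^p)) \<longlonglongrightarrow> ennreal ((norm (\<phi> x))^p)"
      by (intro tendsto_intros)
    then show ?case
      by (intro lim_imp_Liminf[symmetric]) auto
  qed
  also have "\<dots> \<le> liminf (\<lambda>n. \<integral>\<^sup>+x. ennreal ((norm (u n x))^p) \<partial>M)"
    by (rule nn_integral_liminf) measurable
  also have "\<dots> \<le> limsup (\<lambda>n. \<integral>\<^sup>+x. ennreal ((norm (u n x))^p) \<partial>M)"
    by (rule Liminf_le_Limsup) simp
  also have "\<dots> \<le> B"
    by (rule Limsup_bounded[OF bound])
  finally show ?thesis .
qed

lemma eventually_nn_integral_power2_norm_le:
  fixes V :: "nat \<Rightarrow> 'a \<Rightarrow> 'b::{banach,second_countable_topology}"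
  assumes [measurable]: "\<And>n. V n \<in> borel_measurable M" "\<Psi> \<in> borel_measurable M"
    and lim: "(\<lambda>n. \<integral>\<^sup>+x. ennreal ((norm (V n x - \<Psi> x))\<^sup>2) \<partial>M) \<longlonglongrightarrow> 0"
    and g: "(\<integral>\<^sup>+x. ennreal ((norm (\<Psi> x))\<^sup>2) \<partial>M) = ennreal g" "0 \<le> g"
    and "d > 0" "e > 0"
  shows "eventually (\<lambda>n. (\<integral>\<^sup>+x. ennreal ((norm (V n x))\<^sup>2) \<partial>M) \<le> ennreal ((1 + d) * g + (1 + 1 / d) * e))
           sequentially"
proof -
  have "eventually (\<lambda>n. (\<integral>\<^sup>+x. ennreal ((norm (V n x - \<Psi> x))\<^sup>2) \<partial>M) < ennreal e) sequentially"
    using order_tendstoD(2)[OF lim] \<open>e > 0\<close> by simp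
  then show ?thesis
  proof eventually_elim
    case (elim n)
    have "(\<integral>\<^sup>+x. ennreal ((norm (V n x))\<^sup>2) \<partial>M) \<le> ennreal (1 + d) * ennreal g +
        ennreal (1 + 1 / d) * (\<integral>\<^sup>+x. ennreal ((norm (V n x - \<Psi> x))\<^sup>2) \<partial>M)"
      using nn_integral_power2_norm_le_Peter_Paul[OF \<open>d > 0\<close>, of \<Psi> M "V n"] g by simp
    also have "\<dots> \<le> ennreal (1 + d) * ennreal g + ennreal (1 + 1 / d) * ennreal e"
      using elim by (intro add_left_mono mult_left_mono) auto
    also have "\<dots> = ennreal ((1 + d) * g + (1 + 1 / d) * e)"
      using \<open>d > 0\<close> \<open>e > 0\<close> g by (simp add: ennreal_mult ennreal_plus)
    finally show ?case .
  qed
qed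

lemma ennreal_le_of_tendsto_at_right_0:
  fixes k :: "real \<Rightarrow> real"
  assumes "(k \<longlongrightarrow> c) (at_right 0)" and "\<And>d. 0 < d \<Longrightarrow> d < 1 \<Longrightarrow> X \<le> ennreal (k d)"
  shows "X \<le> ennreal c"
proof (rule tendsto_lowerbound)
  show "((\<lambda>d. ennreal (k d)) \<longlongrightarrow> ennreal c) (at_right 0)"
    using assms(1) by (rule tendsto_ennrealI)
  show "eventually (\<lambda>d. X \<le> ennreal (k d)) (at_right (0::real))"
    using assms(2) by (intro eventually_at_rightI[of 0 1]) auto
qed simp

lemma fourth_moment_bound_L2_limit:
  fixes u :: "nat \<Rightarrow> 'a \<Rightarrow> 'b::{banach,second_countable_topology}"
    and V :: "nat \<Rightarrow> 'a \<Rightarrow> 'c::{banach,second_countable_topology}"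
  assumes "finite_measure M"
    and [measurable]: "\<And>n. u n \<in> borel_measurable M" "\<phi> \<in> borel_measurable M"
      "\<And>n. V n \<in> borel_measurable M" "\<Psi> \<in> borel_measurable M"
    and u_lim: "(\<lambda>n. \<integral>\<^sup>+x. ennreal ((norm (u n x - \<phi> x))\<^sup>2) \<partial>M) \<longlonglongrightarrow> 0"
    and V_lim: "(\<lambda>n. \<integral>\<^sup>+x. ennreal ((norm (V n x - \<Psi> x))\<^sup>2) \<partial>M) \<longlonglongrightarrow> 0"
    and bound: "\<And>n. (\<integral>\<^sup>+x. ennreal ((norm (u n x))^4) \<partial>M) \<le>
                  ennreal K * (\<integral>\<^sup>+x. ennreal ((norm (V n x))\<^sup>2) \<partial>M)\<^sup>2"
    and V_fin: "\<And>n. (\<integral>\<^sup>+x. ennreal ((norm (V n x))\<^sup>2) \<partial>M) < \<infinity>"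
    and "K \<ge> 0"
  shows "(\<integral>\<^sup>+x. ennreal ((norm (\<phi> x))^4) \<partial>M) \<le> ennreal K * (\<integral>\<^sup>+x. ennreal ((norm (\<Psi> x))\<^sup>2) \<partial>M)\<^sup>2"
proof -
  let ?X = "\<integral>\<^sup>+x. ennreal ((norm (\<phi> x))^4) \<partial>M"
  obtain g where g: "(\<integral>\<^sup>+x. ennreal ((norm (\<Psi> x))\<^sup>2) \<partial>M) = ennreal g" "0 \<le> g"
    using nn_integral_power2_norm_less_top_of_L2_tendsto[OF assms(4,5) V_lim V_fin]
    by (cases "\<integral>\<^sup>+x. ennreal ((norm (\<Psi> x))\<^sup>2) \<partial>M" rule: ennreal_cases) auto
  obtain r where r: "strict_mono r" and ae: "AE x in M. (\<lambda>n. u (r n) x) \<longlonglongrightarrow> \<phi> x"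
    using L2_tendsto_imp_AE_tendsto_subseq[OF assms(1-3) u_lim] by blast
  have approx: "?X \<le> ennreal (K * B\<^sup>2)"
    if V_bound: "eventually (\<lambda>n. (\<integral>\<^sup>+x. ennreal ((norm (V n x))\<^sup>2) \<partial>M) \<le> ennreal B) sequentially"
      and "B \<ge> 0" for B
  proof -
    from V_bound have evU: "eventually (\<lambda>n. (\<integral>\<^sup>+x. ennreal ((norm (u n x))^4) \<partial>M) \<le> ennreal (K * B\<^sup>2)) sequentially"
    proof eventually_elim
      case (elim n)
      have "(\<integral>\<^sup>+x. ennreal ((norm (u n x))^4) \<partial>M) \<le> ennreal K * (ennreal B)\<^sup>2"
        by (rule order_trans[OF bound]) (intro mult_left_mono power_mono elim; simp)
      then show ?case
        using \<open>K \<ge> 0\<close> \<open>B \<ge> 0\<close> by (simp add: ennreal_mult ennreal_power)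
    qed
    have "eventually (\<lambda>n. (\<integral>\<^sup>+x. ennreal ((norm (u (r n) x))^4) \<partial>M) \<le> ennreal (K * B\<^sup>2)) sequentially"
      using eventually_compose_filterlim[OF evU filterlim_subseq[OF r]] by simp
    from nn_integral_power_norm_le_of_AE_tendsto[where u="\<lambda>n. u (r n)", OF _ ae this]
    show ?thesis
      by simp
  qed
  \<comment> \<open>take \<open>e = d\<^sup>2\<close>, so that \<open>(1 + 1/d) e = d\<^sup>2 + d\<close> vanishes as \<open>d \<rightarrow> 0\<close>\<close>
  have "?X \<le> ennreal (K * ((1 + 0) * g + 0\<^sup>2 + 0)\<^sup>2)"
  proof (rule ennreal_le_of_tendsto_at_right_0)
    show "((\<lambda>d. K * ((1 + d) * g + d\<^sup>2 + d)\<^sup>2) \<longlongrightarrow> K * ((1 + 0) * g + 0\<^sup>2 + 0)\<^sup>2) (at_right 0)"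
      by (intro tendsto_intros)
    fix d :: real
    assume "0 < d"
    then have "(1 + 1 / d) * d\<^sup>2 = d\<^sup>2 + d"
      by (simp add: power2_eq_square field_simps)
    with approx eventually_nn_integral_power2_norm_le[OF _ _ V_lim g \<open>0 < d\<close>, of "d\<^sup>2"] \<open>0 < d\<close> g
    show "?X \<le> ennreal (K * ((1 + d) * g + d\<^sup>2 + d)\<^sup>2)"
      by (simp add: add.assoc)
  qed
  then show ?thesis
    using g \<open>K \<ge> 0\<close> by (simp add: ennreal_mult ennreal_power)
qed

lemma lp_norm_4_le_of_nn_integral_le:
  assumes [measurable]: "\<phi> \<in> borel_measurable (lebesgue_on U)" "\<Psi> \<in> borel_measurable (lebesgue_on U)"
    and bound: "(\<integral>\<^sup>+x. ennreal ((norm (\<phi> x))^4) \<partial>lebesgue_on U) \<le>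
                  ennreal K * (\<integral>\<^sup>+x. ennreal ((norm (\<Psi> x))\<^sup>2) \<partial>lebesgue_on U)\<^sup>2"
    and fin: "(\<integral>\<^sup>+x. ennreal ((norm (\<Psi> x))\<^sup>2) \<partial>lebesgue_on U) < \<infinity>"
    and "K \<ge> 0"
  shows "in_Lp 4 U \<phi> \<and> lp_norm 4 U \<phi> \<le> K powr (1/4) * lp_norm 2 U \<Psi>"
proof -
  have powr4: "norm (\<phi> x) powr 4 = (norm (\<phi> x))^4" and powr2: "norm (\<Psi> x) powr 2 = (norm (\<Psi> x))\<^sup>2" for x
    by simp_all
  have fin4: "(\<integral>\<^sup>+x. ennreal ((norm (\<phi> x))^4) \<partial>lebesgue_on U) < \<infinity>"
    using fin by (intro le_less_trans[OF bound]) (simp add: ennreal_mult_less_top power_less_top_ennreal)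
  have int4: "integrable (lebesgue_on U) (\<lambda>x. norm (\<phi> x) powr 4)"
    unfolding powr4 integrable_iff_bounded using fin4 by simp
  have int2: "integrable (lebesgue_on U) (\<lambda>x. norm (\<Psi> x) powr 2)"
    unfolding powr2 integrable_iff_bounded using fin by simp
  define A where "A = (\<integral>x. norm (\<phi> x) powr 4 \<partial>lebesgue_on U)"
  define B where "B = (\<integral>x. norm (\<Psi> x) powr 2 \<partial>lebesgue_on U)"
  have "A \<ge> 0" "B \<ge> 0"
    unfolding A_def B_def by (simp_all add: integral_nonneg_AE)
  have eqA: "(\<integral>\<^sup>+x. ennreal ((norm (\<phi> x))^4) \<partial>lebesgue_on U) = ennreal A"
    unfolding A_def using nn_integral_eq_integral[OF int4] by (simp add: powr4)
  have eqB: "(\<integral>\<^sup>+x. ennreal ((norm (\<Psi> x))\<^sup>2) \<partial>lebesgue_on U) = ennreal B"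
    unfolding B_def using nn_integral_eq_integral[OF int2] by (simp add: powr2)
  have "ennreal A \<le> ennreal K * (ennreal B)\<^sup>2"
    using bound by (simp only: eqA eqB)
  then have "ennreal A \<le> ennreal (K * B\<^sup>2)"
    using \<open>K \<ge> 0\<close> \<open>B \<ge> 0\<close> by (simp add: ennreal_mult ennreal_power)
  then have "A \<le> K * B\<^sup>2"
    using \<open>K \<ge> 0\<close> by (simp add: ennreal_le_iff)
  then have "A powr (1/4) \<le> (K * B\<^sup>2) powr (1/4)"
    using \<open>A \<ge> 0\<close> by (intro powr_mono2) auto
  also have "\<dots> = K powr (1/4) * (B powr 2) powr (1/4)"
    using \<open>K \<ge> 0\<close> \<open>B \<ge> 0\<close> by (simp add: powr_mult)
  also have "(B powr 2) powr (1/4) = B powr (1/2)"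
    by (simp add: powr_powr)
  finally show ?thesis
    using int4 unfolding in_Lp_def lp_norm_def A_def B_def by simp
qed

lemma h10_slab_L4_estimate:
  assumes "U \<in> lmeasurable" and slab: "U \<subseteq> {x. 0 < x $ 3 \<and> x $ 3 < L}" and "0 \<le> L"
    and "h10 U \<phi> G" and "e > 0"
  shows "in_Lp 4 U \<phi> \<and> lp_norm 4 U \<phi> \<le> (8 * L * e\<^sup>2) powr (1/4) * lp_norm 2 U (Deps e G)"
proof -
  have U: "U \<in> sets lebesgue"
    using assms(1) by (simp add: fmeasurable_def)
  have restrict: "(\<integral>\<^sup>+x. F x \<partial>lebesgue_on U) = (\<integral>\<^sup>+x\<in>U. F x \<partial>lebesgue)" for F :: "real^3 \<Rightarrow> ennreal"
    using U by (simp add: nn_integral_restrict_space)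
  obtain f where f: "\<And>n. C1c U (f n)"
    and f_lim: "(\<lambda>n. \<integral>\<^sup>+x. ennreal ((norm (f n x - \<phi> x))\<^sup>2) \<partial>lebesgue_on U) \<longlonglongrightarrow> 0"
    and grad_lim: "(\<lambda>n. \<integral>\<^sup>+x. ennreal ((norm (grad3 (f n) x - G x))\<^sup>2) \<partial>lebesgue_on U) \<longlonglongrightarrow> 0"
    and \<phi>_measurable [measurable]: "\<phi> \<in> borel_measurable (lebesgue_on U)"
    and G_measurable [measurable]: "G \<in> borel_measurable (lebesgue_on U)"
    using \<open>h10 U \<phi> G\<close> unfolding h10_def restrict by blast
  have f_measurable [measurable]: "f n \<in> borel_measurable (lebesgue_on U)" for n
    using f[of n] unfolding C1c_def
    by (intro continuous_imp_measurable_on_sets_lebesgue[OF _ U])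
      (meson differentiable_at_imp_differentiable_on differentiable_imp_continuous_on)
  have grad3_measurable [measurable]: "grad3 (f n) \<in> borel_measurable (lebesgue_on U)" for n
    by (rule continuous_imp_measurable_on_sets_lebesgue[OF continuous_on_subset[OF C1c_continuous_on_grad3[OF f]] U])
      simp
  have Deps_lim: "(\<lambda>n. \<integral>\<^sup>+x. ennreal ((norm (Deps e (grad3 (f n)) x - Deps e G x))\<^sup>2) \<partial>lebesgue_on U) \<longlonglongrightarrow> 0"
    by (rule Deps_L2_tendsto[OF \<open>e > 0\<close> grad3_measurable G_measurable grad_lim])
  have bound: "(\<integral>\<^sup>+x. ennreal ((norm (\<phi> x))^4) \<partial>lebesgue_on U) \<le>
      ennreal (8 * L * e\<^sup>2) * (\<integral>\<^sup>+x. ennreal ((norm (Deps e G x))\<^sup>2) \<partial>lebesgue_on U)\<^sup>2"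
  proof (rule fourth_moment_bound_L2_limit[where u = f and V = "\<lambda>n. Deps e (grad3 (f n))",
        OF finite_measure_lebesgue_on[OF assms(1)] f_measurable \<phi>_measurable
        measurable_Deps[OF grad3_measurable] measurable_Deps[OF G_measurable] f_lim Deps_lim])
    show "(\<integral>\<^sup>+x. ennreal ((norm (f n x))^4) \<partial>lebesgue_on U) \<le>
        ennreal (8 * L * e\<^sup>2) * (\<integral>\<^sup>+x. ennreal ((norm (Deps e (grad3 (f n)) x))\<^sup>2) \<partial>lebesgue_on U)\<^sup>2" for n
      by (rule C1c_slab_fourth_moment_le[OF f slab \<open>0 \<le> L\<close> \<open>e > 0\<close> U])
    show "(\<integral>\<^sup>+x. ennreal ((norm (Deps e (grad3 (f n)) x))\<^sup>2) \<partial>lebesgue_on U) < \<infinity>" for n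
      by (rule C1c_nn_integral_Deps_less_top[OF f U])
    show "0 \<le> 8 * L * e\<^sup>2"
      using \<open>0 \<le> L\<close> by simp
  qed
  have "(\<integral>\<^sup>+x. ennreal ((norm (Deps e G x))\<^sup>2) \<partial>lebesgue_on U) < \<infinity>"
    by (rule nn_integral_power2_norm_less_top_of_L2_tendsto[OF _ _ Deps_lim C1c_nn_integral_Deps_less_top[OF f U]])
      measurable
  from lp_norm_4_le_of_nn_integral_le[OF \<phi>_measurable measurable_Deps[OF G_measurable] bound this]
  show ?thesis
    using \<open>0 \<le> L\<close> by simp
qed

section \<open>Thin domains\<close>

lemma continuous_on_proj12: "continuous_on S proj12"
  unfolding proj12_def
proof (intro continuous_on_vec_lambda)
  show "continuous_on S (\<lambda>x. if i = 1 then x $ 1 else x $ 2)" for i :: 2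
    by (cases "i = 1") (simp_all add: continuous_on_component)
qed

lemma open_thin_dom:
  assumes "open \<omega>" and "continuous_on \<omega> h"
  shows "open (thin_dom \<omega> h c)"
proof -
  have "thin_dom \<omega> h c = proj12 -` \<omega> \<inter> (\<lambda>x. min (x $ 3) (c * h (proj12 x) - x $ 3)) -` {0<..}"
    by (auto simp: thin_dom_def)
  moreover have "continuous_on (proj12 -` \<omega>) (\<lambda>x. min (x $ 3) (c * h (proj12 x) - x $ 3))"
    by (intro continuous_intros continuous_on_compose2[OF assms(2) continuous_on_proj12]) auto
  ultimately show ?thesis
    using continuous_open_preimage[OF _ open_vimage[OF assms(1) continuous_on_proj12] open_greaterThan]
    by simp
qed

lemma thin_dom_subset_slab:
  assumes "\<forall>x\<in>\<omega>. h x \<le> M" and "c \<ge> 0"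
  shows "thin_dom \<omega> h c \<subseteq> {x. 0 < x $ 3 \<and> x $ 3 < c * M}"
proof
  fix x
  assume "x \<in> thin_dom \<omega> h c"
  then have "proj12 x \<in> \<omega>" "0 < x $ 3" "x $ 3 < c * h (proj12 x)"
    by (auto simp: thin_dom_def)
  moreover have "c * h (proj12 x) \<le> c * M"
    using assms \<open>proj12 x \<in> \<omega>\<close> by (simp add: mult_left_mono)
  ultimately show "x \<in> {x. 0 < x $ 3 \<and> x $ 3 < c * M}"
    by simp
qed

lemma bounded_thin_dom:
  assumes "bounded \<omega>" and "\<forall>x\<in>\<omega>. h x \<le> M" and "c \<ge> 0"
  shows "bounded (thin_dom \<omega> h c)"
proof -
  obtain R where R: "\<And>y. y \<in> \<omega> \<Longrightarrow> norm y \<le> R"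
    using assms(1) bounded_iff by blast
  show ?thesis
    unfolding bounded_iff
  proof (intro exI ballI)
    fix x
    assume x: "x \<in> thin_dom \<omega> h c"
    then have "proj12 x \<in> \<omega>"
      by (auto simp: thin_dom_def)
    then have "\<bar>x $ 1\<bar> \<le> R" "\<bar>x $ 2\<bar> \<le> R"
      using component_le_norm_cart[of "proj12 x" 1] component_le_norm_cart[of "proj12 x" 2] R
      by (force simp: proj12_def)+
    moreover have "\<bar>x $ 3\<bar> \<le> c * M"
      using thin_dom_subset_slab[OF assms(2,3)] x by auto
    ultimately show "norm x \<le> R + R + c * M"
      using norm_le_l1_cart[of x] by (simp add: sum_3)
  qed
qed

lemma thin_dom_L4_estimate:
  assumes "open \<omega>" "bounded \<omega>" "continuous_on \<omega> h" and hM: "\<forall>x\<in>\<omega>. h x \<le> M" and "M > 0"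
    and "\<epsilon> > 0" "e > 0" and "h10 (thin_dom \<omega> h \<epsilon>) \<phi> G"
  shows "in_Lp 4 (thin_dom \<omega> h \<epsilon>) \<phi> \<and>
    lp_norm 4 (thin_dom \<omega> h \<epsilon>) \<phi> \<le>
      (8 * M) powr (1/4) * \<epsilon> powr (1/4) * e powr (1/2) * lp_norm 2 (thin_dom \<omega> h \<epsilon>) (Deps e G)"
proof -
  have "thin_dom \<omega> h \<epsilon> \<in> lmeasurable"
    using assms by (intro lmeasurable_open bounded_thin_dom open_thin_dom) auto
  moreover have "thin_dom \<omega> h \<epsilon> \<subseteq> {x. 0 < x $ 3 \<and> x $ 3 < \<epsilon> * M}"
    using thin_dom_subset_slab[OF hM] \<open>\<epsilon> > 0\<close> by simp
  moreover have "(e\<^sup>2) powr (1/4) = e powr (1/2)"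
  proof -
    have "(e\<^sup>2) powr (1/4) = (e powr 2) powr (1/4)"
      using \<open>e > 0\<close> by simp
    also have "\<dots> = e powr (1/2)"
      by (simp add: powr_powr)
    finally show ?thesis .
  qed
  then have "(8 * (\<epsilon> * M) * e\<^sup>2) powr (1/4) = (8 * M) powr (1/4) * \<epsilon> powr (1/4) * e powr (1/2)"
    using \<open>\<epsilon> > 0\<close> \<open>M > 0\<close> by (simp add: powr_mult mult_ac)
  ultimately show ?thesis
    using h10_slab_L4_estimate[of "thin_dom \<omega> h \<epsilon>" "\<epsilon> * M" \<phi> G e] assms by simp
qed

theorem mainTheorem1:
  fixes \<omega> :: "(real^2) set" and h :: "real^2 \<Rightarrow> real"
  assumes "smooth_bounded_domain \<omega>" and "connected \<omega>"
    and "\<forall>x\<in>\<omega>. h x > 0" and "bounded (h ` \<omega>)" and "C1_on h \<omega>"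
  shows "\<exists>C>0. \<forall>\<epsilon>>0. \<forall>\<phi> G. h10 (thin_dom \<omega> h \<epsilon>) \<phi> G \<longrightarrow>
           (in_Lp 4 (thin_dom \<omega> h \<epsilon>) \<phi> \<and>
            lp_norm 4 (thin_dom \<omega> h \<epsilon>) \<phi> \<le> C * \<epsilon> powr (1/4) * lp_norm 2 (thin_dom \<omega> h \<epsilon>) G) \<and>
           (\<forall>Gt. h10 (thin_dom \<omega> h 1) (rescale \<epsilon> \<phi>) Gt \<longrightarrow>
              in_Lp 4 (thin_dom \<omega> h 1) (rescale \<epsilon> \<phi>) \<and>
              lp_norm 4 (thin_dom \<omega> h 1) (rescale \<epsilon> \<phi>)
                \<le> C * \<epsilon> powr (1/2) * lp_norm 2 (thin_dom \<omega> h 1) (Deps \<epsilon> Gt))"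
proof -
  have "open \<omega>" "bounded \<omega>"
    using assms(1) unfolding smooth_bounded_domain_def by auto
  have "continuous_on \<omega> h"
    using assms(5) unfolding C1_on_def
    by (meson continuous_at_imp_continuous_on differentiable_imp_continuous_within)
  obtain M where "M > 0" and "\<forall>y\<in>h ` \<omega>. norm y \<le> M"
    using assms(4) bounded_pos by blast
  then have hM: "\<forall>x\<in>\<omega>. h x \<le> M"
    by (force simp: abs_le_iff)
  note estimate = thin_dom_L4_estimate[OF \<open>open \<omega>\<close> \<open>bounded \<omega>\<close> \<open>continuous_on \<omega> h\<close> hM \<open>M > 0\<close>]
  show ?thesis
    using estimate[of _ 1] estimate[OF zero_less_one] \<open>M > 0\<close>
    by (intro exI[of _ "(8 * M) powr (1/4)"]) (auto simp: Deps_1)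
qed

end
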